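(* Let $K\ge 1$ and let $R_1,\dots,R_K>0$ be pairwise distinct. Let $c>\max\{R_1\ln 2,\dots,R_K\ln 2\}$ and $$g_K(R_1,\dots,R_K)=\frac{1}{2\pi \mathrm{i}}\int_{c-\mathrm{i}\infty}^{c+\mathrm{i}\infty}\frac{e^{s}}{s\prod_{k=1}^{K}\left(\frac{s}{R_k\ln 2}-1\right)}\,ds .$$ Then $$g_K(R_1,\dots,R_K)=(-1)^K+\frac{\det(\mathbf A)}{\det(\mathbf B)},$$ where $\mathbf A$ is the $K\times K$ matrix whose $k$-th row is $(R_k,R_k^2,\dots,R_k^{K-1},2^{R_k})$ and $\mathbf B$ is the $K\times K$ Vandermonde matrix whose $k$-th row is $(1,R_k,R_k^2,\dots,R_k^{K-1})$.
   Context: Here $\mathrm{i}=\sqrt{-1}$. In the paper this yields the closed form $p_{out\_asy,K}=\pi^K f_{\mathbf h}(\mathbf 0)\prod_{k=1}^K\frac{\mathcal N_0}{P_k}\left((-1)^K+\det(\mathbf A)/\det(\mathbf B)\right)$ for the asymptotic outage probability of variable-rate HARQ-IR, where $f_{\mathbf h}(\mathbf 0)$, $P_k$, $\mathcal N_0$ are positive constants. *)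

theory Defs
  imports "HOL-Complex_Analysis.Complex_Analysis" "Jordan_Normal_Form.Determinant"
begin

definition gK_integrand :: "nat \<Rightarrow> (nat \<Rightarrow> real) \<Rightarrow> complex \<Rightarrow> complex" where
  "gK_integrand K R s =
     exp s / (s * (\<Prod>k<K. s / complex_of_real (R k * ln 2) - 1))"

definition matA :: "nat \<Rightarrow> (nat \<Rightarrow> real) \<Rightarrow> real mat" where
  "matA K R = mat K K (\<lambda>(k, j). if j = K - 1 then 2 powr R k else R k ^ (j + 1))"

definition matB :: "nat \<Rightarrow> (nat \<Rightarrow> real) \<Rightarrow> real mat" where
  "matB K R = mat K K (\<lambda>(k, j). R k ^ j)"

end

theory Submission
  imports Defs "HOL-Real_Asymp.Real_Asymp"
begin

text \<open>Close the segment from c - iT to c + iT by the left half of the circle of radius T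
  about c. For T \<ge> 2c the circle encloses the simple poles 0 and a_k = R_k ln 2 of the
  integrand, with residues (-1)^K and 2^R_k \<Prod>_{j \<noteq> k} R_j / (R_k - R_j), while on the
  arc the integrand is O(T^-2), so the arc contributes nothing in the limit. The residues at
  the a_k add up to det A / det B: if P is the polynomial of degree < K interpolating 2^R_k at
  the nodes R_k, then A = B M, where M has ones on its subdiagonal and the coefficients of P in
  its last column. Hence det A / det B = det M = (-1)^(K-1) P(0), and Lagrange's formula turns
  this into the sum of those residues.\<close>

section \<open>Vandermonde determinants and Lagrange interpolation\<close>

lemma poly_eq_sum_lessThan:
  fixes p :: "'a::comm_semiring_1 poly"
  assumes "degree p < n"
  shows "poly p x = (\<Sum>i<n. coeff p i * x ^ i)"
proof -
  have "poly p x = (\<Sum>i\<le>degree p. coeff p i * x ^ i)" by (rule poly_altdef)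
  also have "\<dots> = (\<Sum>i<n. coeff p i * x ^ i)"
    by (rule sum.mono_neutral_left) (use assms in \<open>auto simp: coeff_eq_0\<close>)
  finally show ?thesis .
qed

text \<open>A null vector of the Vandermonde matrix is the coefficient vector of a polynomial of
  degree below K vanishing at the K distinct nodes.\<close>
lemma det_matB_nonzero:
  assumes inj: "inj_on R {..<K}"
  shows "det (matB K R) \<noteq> 0"
proof
  assume "det (matB K R) = 0"
  then obtain v where v: "v \<in> carrier_vec K" "v \<noteq> 0\<^sub>v K" "matB K R *\<^sub>v v = 0\<^sub>v K"
    using det_0_iff_vec_prod_zero_field[of "matB K R" K] by (auto simp: matB_def)
  define p where "p = (\<Sum>i<K. monom (v $ i) i)"
  have coeff_p: "coeff p i = (if i < K then v $ i else 0)" for i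
    unfolding p_def coeff_sum coeff_monom by auto
  have "p \<noteq> 0"
  proof
    assume "p = 0"
    then have "v $ i = 0" if "i < K" for i
      using coeff_p[of i] that by simp
    then have "v = 0\<^sub>v K"
      using v(1) by (intro eq_vecI) auto
    with v(2) show False by simp
  qed
  have roots: "poly p (R k) = 0" if "k < K" for k
  proof -
    have "poly p (R k) = (\<Sum>i<K. v $ i * R k ^ i)"
      unfolding p_def poly_sum poly_monom by simp
    also have "\<dots> = (matB K R *\<^sub>v v) $ k"
      using v(1) that
      by (simp add: matB_def mult_mat_vec_def scalar_prod_def lessThan_atLeast0 mult.commute)
    finally show ?thesis using v(3) that by simp
  qed
  have "degree p \<le> K - 1"
    unfolding p_def by (rule degree_sum_le) (auto intro: order.trans[OF degree_monom_le])
  moreover have "K \<le> degree p"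
  proof -
    have "K = card (R ` {..<K})" using card_image[OF inj] by simp
    also have "\<dots> \<le> card {x. poly p x = 0}"
      using roots \<open>p \<noteq> 0\<close> by (intro card_mono poly_roots_finite) auto
    also have "\<dots> \<le> degree p" by (rule card_poly_roots_bound) fact
    finally show ?thesis .
  qed
  ultimately have "K = 0" by simp
  then show False using v by auto
qed

definition lagrange_poly :: "nat \<Rightarrow> (nat \<Rightarrow> 'a::field) \<Rightarrow> (nat \<Rightarrow> 'a) \<Rightarrow> 'a poly" where
  "lagrange_poly K x y =
     (\<Sum>k<K. Polynomial.smult (y k / (\<Prod>j\<in>{..<K}-{k}. x k - x j)) (\<Prod>j\<in>{..<K}-{k}. [:- x j, 1:]))"

lemma poly_lagrange_poly:
  "poly (lagrange_poly K x y) t = (\<Sum>k<K. y k * (\<Prod>j\<in>{..<K}-{k}. (t - x j) / (x k - x j)))"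
  by (simp add: lagrange_poly_def poly_sum poly_prod prod_dividef)

lemma poly_lagrange_poly_node:
  assumes "inj_on x {..<K}" and "m < K"
  shows "poly (lagrange_poly K x y) (x m) = y m"
proof -
  have "poly (lagrange_poly K x y) (x m) =
        (\<Sum>k\<in>{m}. y k * (\<Prod>j\<in>{..<K}-{k}. (x m - x j) / (x k - x j)))"
    unfolding poly_lagrange_poly by (rule sum.mono_neutral_right) (use assms in auto)
  moreover have "(\<Prod>j\<in>{..<K}-{m}. (x m - x j) / (x m - x j)) = 1"
    using assms by (intro prod.neutral) (auto simp: inj_on_def)
  ultimately show ?thesis by simp
qed

lemma degree_lagrange_poly:
  assumes "K > 0"
  shows "degree (lagrange_poly K x y) < K"
proof -
  have "degree (lagrange_poly K x y) \<le> K - 1"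
    unfolding lagrange_poly_def
  proof (rule degree_sum_le)
    fix k assume k: "k \<in> {..<K}"
    have "degree (\<Prod>j\<in>{..<K}-{k}. [:- x j, 1:]) \<le> (\<Sum>j\<in>{..<K}-{k}. degree [:- x j, 1:])"
      using degree_prod_sum_le[of "{..<K}-{k}" "\<lambda>j. [:- x j, 1:]"] by (simp add: o_def)
    also have "\<dots> = K - 1" using k by simp
    finally show "degree (Polynomial.smult (y k / (\<Prod>j\<in>{..<K}-{k}. x k - x j))
                    (\<Prod>j\<in>{..<K}-{k}. [:- x j, 1:])) \<le> K - 1"
      using degree_smult_le order.trans by blast
  qed simp
  then show ?thesis using assms by simp
qed

text \<open>Right multiplication by this matrix shifts the columns of a matrix one place to the left
  and appends the column obtained by multiplying with x.\<close>
definition companion_mat :: "nat \<Rightarrow> (nat \<Rightarrow> 'a::comm_ring_1) \<Rightarrow> 'a mat" where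
  "companion_mat K x = mat K K (\<lambda>(i, j). if j = K - 1 then x i else if i = j + 1 then 1 else 0)"

lemma det_companion_mat:
  assumes "K > 0"
  shows "det (companion_mat K x) = (-1) ^ (K - 1) * x 0"
proof -
  let ?M = "companion_mat K x"
  have M: "?M \<in> carrier_mat K K" by (simp add: companion_mat_def)
  have "det ?M = (\<Sum>j<K. ?M $$ (0, j) * cofactor ?M 0 j)"
    by (rule laplace_expansion_row[OF M]) (use assms in auto)
  also have "\<dots> = (\<Sum>j\<in>{K - 1}. ?M $$ (0, j) * cofactor ?M 0 j)"
    by (rule sum.mono_neutral_right) (use assms in \<open>auto simp: companion_mat_def\<close>)
  also have "mat_delete ?M 0 (K - 1) = 1\<^sub>m (K - 1)"
    by (rule eq_matI) (auto simp: mat_delete_def companion_mat_def)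
  then have "(\<Sum>j\<in>{K - 1}. ?M $$ (0, j) * cofactor ?M 0 j) = x 0 * (-1) ^ (K - 1)"
    using assms by (simp add: cofactor_def companion_mat_def)
  finally show ?thesis by simp
qed

lemma matA_eq_matB_mult_companion_mat:
  assumes "degree P < K" and "\<And>k. k < K \<Longrightarrow> poly P (R k) = 2 powr R k"
  shows "matA K R = matB K R * companion_mat K (coeff P)"
proof (rule eq_matI)
  fix k j assume "k < dim_row (matB K R * companion_mat K (coeff P))"
    and "j < dim_col (matB K R * companion_mat K (coeff P))"
  then have k: "k < K" and j: "j < K" by (auto simp: matB_def companion_mat_def)
  have "(matB K R * companion_mat K (coeff P)) $$ (k, j) =
        (\<Sum>l<K. R k ^ l * companion_mat K (coeff P) $$ (l, j))"
    using k j by (simp add: matB_def companion_mat_def scalar_prod_def lessThan_atLeast0)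
  also have "\<dots> = matA K R $$ (k, j)"
  proof (cases "j = K - 1")
    case True
    have "(\<Sum>l<K. R k ^ l * companion_mat K (coeff P) $$ (l, j)) = poly P (R k)"
      using True by (simp add: poly_eq_sum_lessThan[OF assms(1)] companion_mat_def mult.commute)
    then show ?thesis using True k assms(2) by (simp add: matA_def)
  next
    case False
    have "(\<Sum>l<K. R k ^ l * companion_mat K (coeff P) $$ (l, j)) = (\<Sum>l\<in>{j + 1}. R k ^ l)"
      using False j by (intro sum.mono_neutral_cong_right) (auto simp: companion_mat_def)
    then show ?thesis using False k j by (simp add: matA_def)
  qed
  finally show "matA K R $$ (k, j) = (matB K R * companion_mat K (coeff P)) $$ (k, j)" ..
qed (auto simp: matA_def matB_def companion_mat_def)

lemma det_matA_div_det_matB: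
  assumes "K > 0" and inj: "inj_on R {..<K}"
  shows "det (matA K R) / det (matB K R) =
         (\<Sum>k<K. 2 powr R k * (\<Prod>j\<in>{..<K}-{k}. R j / (R k - R j)))"
proof -
  define P where "P = lagrange_poly K R (\<lambda>k. 2 powr R k)"
  have "matA K R = matB K R * companion_mat K (coeff P)"
    unfolding P_def using assms
    by (intro matA_eq_matB_mult_companion_mat degree_lagrange_poly poly_lagrange_poly_node)
  moreover have "matB K R \<in> carrier_mat K K" "companion_mat K (coeff P) \<in> carrier_mat K K"
    by (simp_all add: matB_def companion_mat_def)
  ultimately have "det (matA K R) = det (matB K R) * det (companion_mat K (coeff P))"
    by (simp add: det_mult)
  then have "det (matA K R) / det (matB K R) = det (companion_mat K (coeff P))"
    using det_matB_nonzero[OF inj] by simp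
  also have "\<dots> = (-1) ^ (K - 1) * poly P 0"
    using assms(1) by (simp add: det_companion_mat poly_0_coeff_0)
  also have "\<dots> = (\<Sum>k<K. 2 powr R k * ((-1) ^ (K - 1) * (\<Prod>j\<in>{..<K}-{k}. - R j / (R k - R j))))"
    by (simp add: P_def poly_lagrange_poly sum_distrib_left mult_ac)
  also have "\<dots> = (\<Sum>k<K. 2 powr R k * (\<Prod>j\<in>{..<K}-{k}. R j / (R k - R j)))"
  proof (rule sum.cong)
    fix k assume "k \<in> {..<K}"
    then have "card ({..<K}-{k}) = K - 1" by simp
    then show "2 powr R k * ((-1) ^ (K - 1) * (\<Prod>j\<in>{..<K}-{k}. - R j / (R k - R j))) =
               2 powr R k * (\<Prod>j\<in>{..<K}-{k}. R j / (R k - R j))"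
      by (simp add: prod_uminus flip: power_add mult.assoc)
  qed simp
  finally show ?thesis .
qed

section \<open>Vertical segments closed by half circles\<close>

lemma Re_in_path_image_part_circlepath:
  assumes "z \<in> path_image (part_circlepath w r s t)" and "s \<le> t"
  obtains x where "x \<in> {s..t}" and "Re z = Re w + r * cos x"
  using assms unfolding path_image_part_circlepath' closed_segment_eq_real_ivl by auto

lemma left_half_circle_Re_le:
  assumes "z \<in> path_image (part_circlepath w r (pi/2) (3/2*pi))" and "0 \<le> r"
  shows "Re z \<le> Re w"
proof -
  obtain x where "x \<in> {pi/2..3/2*pi}" and "Re z = Re w + r * cos x"
    using assms(1) by (rule Re_in_path_image_part_circlepath) simp
  moreover have "cos x \<le> 0" if "x \<in> {pi/2..3/2*pi}" for x
    using cos_ge_zero[of "x - pi"] that by (simp add: cos_diff)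
  ultimately show ?thesis using \<open>0 \<le> r\<close> by (simp add: mult_nonneg_nonpos)
qed

lemma contour_integrable_part_circlepath_subinterval:
  assumes "f contour_integrable_on part_circlepath w r s t" and "s \<le> u" "u < v" "v \<le> t"
  shows "f contour_integrable_on part_circlepath w r u v"
proof -
  have "(\<lambda>x. f (w + r * cis x) * r * \<i> * cis x) integrable_on {s..t}"
    using assms by (simp add: contour_integrable_part_circlepath_iff)
  then have "(\<lambda>x. f (w + r * cis x) * r * \<i> * cis x) integrable_on {u..v}"
    by (rule integrable_subinterval_real) (use assms in auto)
  then show ?thesis using assms by (simp add: contour_integrable_part_circlepath_iff)
qed

lemma contour_integral_part_circlepath_combine:
  assumes "f contour_integrable_on part_circlepath w r s t" and "s < u" "u < t"
  shows "contour_integral (part_circlepath w r s t) f =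
         contour_integral (part_circlepath w r s u) f + contour_integral (part_circlepath w r u t) f"
proof -
  have "(\<lambda>x. f (w + r * cis x) * r * \<i> * cis x) integrable_on {s..t}"
    using assms by (simp add: contour_integrable_part_circlepath_iff)
  then show ?thesis
    using assms
    by (simp add: contour_integral_part_circlepath_eq Henstock_Kurzweil_Integration.integral_combine)
qed

lemma contour_integral_circlepath_split:
  assumes "f contour_integrable_on circlepath w r"
  shows "contour_integral (circlepath w r) f =
           contour_integral (part_circlepath w r 0 (pi/2)) f
         + contour_integral (part_circlepath w r (pi/2) (3/2*pi)) f
         + contour_integral (part_circlepath w r (3/2*pi) (2*pi)) f"
proof -
  have "contour_integral (circlepath w r) f =
          contour_integral (part_circlepath w r 0 (3/2*pi)) f
        + contour_integral (part_circlepath w r (3/2*pi) (2*pi)) f"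
    unfolding circlepath_def
    by (rule contour_integral_part_circlepath_combine) (use assms in \<open>auto simp: circlepath_def\<close>)
  also have "contour_integral (part_circlepath w r 0 (3/2*pi)) f =
               contour_integral (part_circlepath w r 0 (pi/2)) f
             + contour_integral (part_circlepath w r (pi/2) (3/2*pi)) f"
  proof (rule contour_integral_part_circlepath_combine)
    show "f contour_integrable_on part_circlepath w r 0 (3/2*pi)"
      using assms unfolding circlepath_def
      by (rule contour_integrable_part_circlepath_subinterval) auto
  qed auto
  finally show ?thesis .
qed

lemma exp_i_multiples_half_pi:
  "exp (\<i> * complex_of_real (pi/2)) = \<i>" "exp (\<i> * complex_of_real (3/2*pi)) = - \<i>"
  "exp (\<i> * complex_of_real (2*pi)) = 1"
  unfolding cis_conv_exp [symmetric]
  using cos_3over2_pi sin_3over2_pi by (simp_all add: complex_eq_iff)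

lemma right_half_circle_subset_halfplane:
  fixes c m T :: real
  assumes "m < c" and "T > 0"
  shows "path_image (linepath (c - \<i> * T) (c + \<i> * T)) \<subseteq> {s. m < Re s}"
    and "path_image (part_circlepath c T 0 (pi/2)) \<subseteq> {s. m < Re s}"
    and "path_image (part_circlepath c T (3/2*pi) (2*pi)) \<subseteq> {s. m < Re s}"
proof -
  have arc: "path_image (part_circlepath c T s t) \<subseteq> {s. m < Re s}"
    if "s \<le> t" and "\<And>x. x \<in> {s..t} \<Longrightarrow> cos x \<ge> 0" for s t
  proof
    fix z assume "z \<in> path_image (part_circlepath c T s t)"
    then obtain x where x: "x \<in> {s..t}" and "Re z = c + T * cos x"
      using \<open>s \<le> t\<close> by (auto elim: Re_in_path_image_part_circlepath)
    moreover have "0 \<le> T * cos x" using that(2)[OF x] \<open>T > 0\<close> by simp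
    ultimately show "z \<in> {s. m < Re s}" using \<open>m < c\<close> by simp
  qed
  show "path_image (linepath (c - \<i> * T) (c + \<i> * T)) \<subseteq> {s. m < Re s}"
    unfolding path_image_linepath
    by (rule closed_segment_subset) (use assms in \<open>auto intro: convex_halfspace_Re_gt\<close>)
  show "path_image (part_circlepath c T 0 (pi/2)) \<subseteq> {s. m < Re s}"
    by (rule arc) (auto intro: cos_ge_zero)
  have "cos x \<ge> 0" if "x \<in> {3/2*pi..2*pi}" for x
    using cos_ge_zero[of "x - 2*pi"] that by (simp add: cos_diff)
  then show "path_image (part_circlepath c T (3/2*pi) (2*pi)) \<subseteq> {s. m < Re s}"
    by (intro arc) auto
qed

lemma contour_integral_vertical_segment_eq_right_arcs:
  fixes c m T :: real
  assumes holo: "f holomorphic_on {s. m < Re s}" and "m < c" and "T > 0"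
  shows "contour_integral (linepath (c - \<i> * T) (c + \<i> * T)) f =
           contour_integral (part_circlepath c T 0 (pi/2)) f
         + contour_integral (part_circlepath c T (3/2*pi) (2*pi)) f"
proof -
  define H where "H = {s. m < Re s}"
  define L where "L = linepath (c - \<i> * T) (c + \<i> * T)"
  define A1 where "A1 = part_circlepath c T 0 (pi/2)"
  define A4 where "A4 = part_circlepath c T (3/2*pi) (2*pi)"
  have H: "open H" "convex H" "f holomorphic_on H"
    using holo by (auto simp: H_def intro: open_halfspace_Re_gt convex_halfspace_Re_gt)
  have paths: "path_image L \<subseteq> H" "path_image A1 \<subseteq> H" "path_image A4 \<subseteq> H"
    using right_half_circle_subset_halfplane[OF \<open>m < c\<close> \<open>T > 0\<close>]
    by (simp_all add: H_def L_def A1_def A4_def)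
  have valid: "valid_path L" "valid_path A1" "valid_path A4"
    by (simp_all add: L_def A1_def A4_def)
  have integrable: "f contour_integrable_on L" "f contour_integrable_on A1" "f contour_integrable_on A4"
    using H paths valid by (auto intro!: contour_integrable_holomorphic_simple[of f H])
  have ends: "pathfinish L = c + \<i> * T" "pathstart L = c - \<i> * T"
    "pathstart A1 = c + T" "pathfinish A1 = c + \<i> * T"
    "pathstart A4 = c - \<i> * T" "pathfinish A4 = c + T"
    unfolding L_def A1_def A4_def pathstart_part_circlepath pathfinish_part_circlepath
      exp_i_multiples_half_pi
    by simp_all
  have "path_image (reversepath A1 +++ reversepath A4) \<subseteq> H"
    using path_image_join_subset[of "reversepath A1" "reversepath A4"] paths by auto
  then have "path_image (L +++ (reversepath A1 +++ reversepath A4)) \<subseteq> H"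
    using path_image_join_subset[of L "reversepath A1 +++ reversepath A4"] paths by blast
  then have "(f has_contour_integral 0) (L +++ (reversepath A1 +++ reversepath A4))"
    using H valid ends by (intro Cauchy_theorem_convex_simple[of f H]) auto
  then have "contour_integral (L +++ (reversepath A1 +++ reversepath A4)) f = 0"
    by (rule contour_integral_unique)
  then have "contour_integral L f + (- contour_integral A1 f - contour_integral A4 f) = 0"
    using integrable valid ends
    by (simp add: contour_integral_reversepath contour_integrable_reversepath valid_path_join)
  then show ?thesis by (simp add: L_def A1_def A4_def algebra_simps)
qed

lemma contour_integral_vertical_segment_residues:
  fixes c T :: real
  assumes holo: "f holomorphic_on - P" and "finite P" and "T > 0"
    and inside: "\<And>p. p \<in> P \<Longrightarrow> Re p < c \<and> norm (p - complex_of_real c) < T"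
  shows "contour_integral (linepath (c - \<i> * T) (c + \<i> * T)) f =
         2 * pi * \<i> * (\<Sum>p\<in>P. residue f p) - contour_integral (part_circlepath c T (pi/2) (3/2*pi)) f"
proof -
  define m where "m = Max (insert (c - 1) (Re ` P))"
  have "m < c"
    unfolding m_def using \<open>finite P\<close> inside by (subst Max_less_iff) auto
  have m: "Re p \<le> m" if "p \<in> P" for p
    unfolding m_def using \<open>finite P\<close> that by (intro Max_ge) auto
  have "f holomorphic_on {s. m < Re s}"
    by (rule holomorphic_on_subset[OF holo]) (auto dest: m)
  then have segment: "contour_integral (linepath (c - \<i> * T) (c + \<i> * T)) f =
           contour_integral (part_circlepath c T 0 (pi/2)) f
         + contour_integral (part_circlepath c T (3/2*pi) (2*pi)) f"
    using \<open>m < c\<close> \<open>T > 0\<close> by (rule contour_integral_vertical_segment_eq_right_arcs)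
  have "path_image (circlepath c T) \<subseteq> - P"
  proof
    fix z assume "z \<in> path_image (circlepath c T)"
    then have "norm (z - c) = T"
      using \<open>T > 0\<close> by (simp add: dist_norm norm_minus_commute)
    then show "z \<in> - P" using inside[of z] by auto
  qed
  then have "f contour_integrable_on circlepath c T"
    using holo \<open>finite P\<close>
    by (intro contour_integrable_holomorphic_simple[of f "- P"]) (auto intro: finite_imp_closed)
  moreover have "contour_integral (circlepath c T) f = 2 * pi * \<i> * (\<Sum>p\<in>P. residue f p)"
  proof -
    have "contour_integral (circlepath c T) f =
          2 * pi * \<i> * (\<Sum>p\<in>P. winding_number (circlepath c T) p * residue f p)"
      using \<open>path_image (circlepath c T) \<subseteq> - P\<close> holo[unfolded Compl_eq_Diff_UNIV]
      by (intro Residue_theorem[of UNIV P] \<open>finite P\<close>) auto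
    also have "(\<Sum>p\<in>P. winding_number (circlepath c T) p * residue f p) = (\<Sum>p\<in>P. residue f p)"
      using inside by (intro sum.cong) (auto simp: winding_number_circlepath dist_norm norm_minus_commute)
    finally show ?thesis .
  qed
  ultimately show ?thesis
    using segment contour_integral_circlepath_split[of f c T] by (simp add: algebra_simps)
qed

lemma norm_diff_ge_half_radius:
  fixes a c T :: real and z :: complex
  assumes "0 \<le> a" "a \<le> c" "2 * c \<le> T" and "norm (z - c) = T"
  shows "T / 2 \<le> norm (z - a)"
proof -
  have "T \<le> norm (z - a) + norm (complex_of_real a - c)"
    using norm_triangle_ineq[of "z - a" "a - c"] assms(4) by simp
  also have "norm (complex_of_real a - c) = c - a"
    using assms(2) by (simp flip: of_real_diff)
  finally show ?thesis using assms by simp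
qed

section \<open>The Bromwich integrand\<close>

definition gK_poles :: "nat \<Rightarrow> (nat \<Rightarrow> real) \<Rightarrow> complex set" where
  "gK_poles K R = insert 0 ((\<lambda>k. complex_of_real (R k * ln 2)) ` {..<K})"

lemma finite_gK_poles: "finite (gK_poles K R)"
  by (simp add: gK_poles_def)

lemma gK_integrand_holomorphic:
  assumes pos: "\<And>k. k < K \<Longrightarrow> R k > 0"
  shows "gK_integrand K R holomorphic_on - gK_poles K R"
proof -
  have "s / complex_of_real (R k * ln 2) - 1 \<noteq> 0" if "s \<notin> gK_poles K R" "k < K" for s k
    using that pos[of k] by (auto simp: gK_poles_def field_simps)
  then show ?thesis
    unfolding gK_integrand_def[abs_def] by (intro holomorphic_intros) (auto simp: gK_poles_def)
qed

lemma residue_gK_integrand_0: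
  assumes pos: "\<And>k. k < K \<Longrightarrow> R k > 0"
  shows "residue (gK_integrand K R) 0 = (-1) ^ K"
proof -
  define G where "G w = exp w / (\<Prod>k<K. w / complex_of_real (R k * ln 2) - 1)" for w
  define S where "S = - (\<lambda>k. complex_of_real (R k * ln 2)) ` {..<K}"
  have "open S" unfolding S_def by (intro open_Compl finite_imp_closed) auto
  moreover have "0 \<in> S" using pos by (force simp: S_def)
  moreover have "G holomorphic_on S"
  proof -
    have "w / complex_of_real (R k * ln 2) - 1 \<noteq> 0" if "w \<in> S" "k < K" for w k
      using that pos[of k] by (auto simp: S_def field_simps)
    then show ?thesis unfolding G_def[abs_def] by (intro holomorphic_intros) auto
  qed
  ultimately have "residue (\<lambda>w. G w / (w - 0)) 0 = G 0" by (rule residue_simple)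
  moreover have "gK_integrand K R = (\<lambda>w. G w / (w - 0))"
    by (auto simp: gK_integrand_def G_def fun_eq_iff)
  moreover have "G 0 = (-1) ^ K"
    by (simp add: G_def prod_uminus flip: power_one_over)
  ultimately show ?thesis by simp
qed

lemma residue_gK_integrand_pole:
  assumes pos: "\<And>k. k < K \<Longrightarrow> R k > 0" and inj: "inj_on R {..<K}" and m: "m < K"
  shows "residue (gK_integrand K R) (complex_of_real (R m * ln 2)) =
         complex_of_real (2 powr R m * (\<Prod>j\<in>{..<K}-{m}. R j / (R m - R j)))"
proof -
  define a where "a k = complex_of_real (R k * ln 2)" for k
  have a_nz: "a k \<noteq> 0" if "k < K" for k using pos[OF that] by (simp add: a_def)
  define G where "G w = a m * exp w / (w * (\<Prod>k\<in>{..<K}-{m}. w / a k - 1))" for w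
  define S where "S = - insert 0 (a ` ({..<K}-{m}))"
  have "open S" unfolding S_def by (intro open_Compl finite_imp_closed) auto
  moreover have "a m \<in> S"
    using a_nz[OF m] inj m by (auto simp: S_def a_def inj_on_def)
  moreover have "G holomorphic_on S"
  proof -
    have "w / a k - 1 \<noteq> 0" if "w \<in> S" "k \<in> {..<K}-{m}" for w k
      using that a_nz[of k] by (auto simp: S_def field_simps)
    then show ?thesis unfolding G_def[abs_def] by (intro holomorphic_intros) (auto simp: S_def)
  qed
  ultimately have "residue (\<lambda>w. G w / (w - a m)) (a m) = G (a m)" by (rule residue_simple)
  moreover have "gK_integrand K R = (\<lambda>w. G w / (w - a m))"
  proof
    fix w
    have "(\<Prod>k<K. w / a k - 1) = (w / a m - 1) * (\<Prod>k\<in>{..<K}-{m}. w / a k - 1)"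
      using m by (subst prod.remove[of _ m]) auto
    also have "w / a m - 1 = (w - a m) / a m" using a_nz[OF m] by (simp add: field_simps)
    finally show "gK_integrand K R w = G w / (w - a m)"
      unfolding gK_integrand_def G_def a_def[symmetric]
      by (simp add: divide_inverse)
  qed
  moreover have "G (a m) = complex_of_real (2 powr R m * (\<Prod>j\<in>{..<K}-{m}. R j / (R m - R j)))"
  proof -
    have "a m / a k - 1 = complex_of_real ((R m - R k) / R k)" if "k \<in> {..<K}-{m}" for k
      using that pos[of k] by (simp add: a_def field_simps)
    then have "(\<Prod>k\<in>{..<K}-{m}. a m / a k - 1) = complex_of_real (\<Prod>k\<in>{..<K}-{m}. (R m - R k) / R k)"
      unfolding of_real_prod by (rule prod.cong[OF refl])
    moreover have "exp (a m) = complex_of_real (2 powr R m)"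
      unfolding a_def exp_of_real by (simp add: powr_def mult.commute)
    ultimately show ?thesis
      using a_nz[OF m] by (simp add: G_def prod_dividef)
  qed
  ultimately show ?thesis by (simp add: a_def)
qed

lemma sum_residues_gK_integrand:
  assumes "K > 0" and pos: "\<And>k. k < K \<Longrightarrow> R k > 0" and inj: "inj_on R {..<K}"
  shows "(\<Sum>p\<in>gK_poles K R. residue (gK_integrand K R) p) =
         complex_of_real ((-1) ^ K + det (matA K R) / det (matB K R))"
proof -
  have inj_poles: "inj_on (\<lambda>k. complex_of_real (R k * ln 2)) {..<K}"
    using inj by (auto simp: inj_on_def)
  have "0 \<notin> (\<lambda>k. complex_of_real (R k * ln 2)) ` {..<K}"
    using pos by force
  then have "(\<Sum>p\<in>gK_poles K R. residue (gK_integrand K R) p) =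
      residue (gK_integrand K R) 0 +
      (\<Sum>p\<in>(\<lambda>k. complex_of_real (R k * ln 2)) ` {..<K}. residue (gK_integrand K R) p)"
    by (simp add: gK_poles_def)
  also have "\<dots> = residue (gK_integrand K R) 0 +
      (\<Sum>k<K. residue (gK_integrand K R) (complex_of_real (R k * ln 2)))"
    by (simp only: sum.reindex[OF inj_poles] o_def)
  also have "\<dots> = (-1) ^ K +
      (\<Sum>k<K. complex_of_real (2 powr R k * (\<Prod>j\<in>{..<K}-{k}. R j / (R k - R j))))"
    using residue_gK_integrand_0[OF pos] residue_gK_integrand_pole[OF pos inj] by simp
  also have "\<dots> = complex_of_real ((-1) ^ K + det (matA K R) / det (matB K R))"
    unfolding det_matA_div_det_matB[OF assms(1) inj] by simp
  finally show ?thesis .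
qed

lemma gK_poles_near_abscissa:
  fixes c T :: real
  assumes pos: "\<And>k. k < K \<Longrightarrow> R k > 0" and lt: "\<And>k. k < K \<Longrightarrow> R k * ln 2 < c"
    and "0 < c" "c < T" and "p \<in> gK_poles K R"
  shows "Re p < c \<and> norm (p - complex_of_real c) < T"
proof -
  from \<open>p \<in> gK_poles K R\<close>
  consider "p = 0" | k where "k < K" "p = complex_of_real (R k * ln 2)"
    unfolding gK_poles_def by blast
  then show ?thesis
  proof cases
    case 1
    then show ?thesis using assms by simp
  next
    case (2 k)
    define a where "a = R k * ln 2"
    have "0 < a" "a < c" using pos[OF 2(1)] lt[OF 2(1)] by (simp_all add: a_def)
    moreover have "p = complex_of_real a" using 2(2) by (simp add: a_def)
    ultimately show ?thesis using \<open>c < T\<close> by (simp flip: of_real_diff)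
  qed
qed

text \<open>On the left half of the circle of radius T \<ge> 2c about c every factor of the
  denominator is at least T/(2c) in modulus; the factor s alone gives T/2.\<close>
lemma norm_gK_integrand_le:
  fixes c T :: real
  assumes "K > 0" and pos: "\<And>k. k < K \<Longrightarrow> R k > 0" and lt: "\<And>k. k < K \<Longrightarrow> R k * ln 2 < c"
    and T: "2 * c \<le> T" and "Re z \<le> c" and z: "norm (z - c) = T"
  shows "norm (gK_integrand K R z) \<le> 4 * c * exp c / T^2"
proof -
  have "c > 0" using pos[of 0] lt[of 0] \<open>K > 0\<close> by (smt (verit) ln_gt_zero mult_pos_pos)
  define q where "q = T / (2 * c)"
  have "q \<ge> 1" using T \<open>c > 0\<close> by (simp add: q_def)
  have factor: "q \<le> norm (z / complex_of_real (R k * ln 2) - 1)" if "k < K" for k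
  proof -
    define a where "a = R k * ln 2"
    have a: "0 < a" "a < c" using pos[OF that] lt[OF that] by (auto simp: a_def)
    have "q = (T / 2) / c" by (simp add: q_def)
    also have "\<dots> \<le> norm (z - a) / a"
      using norm_diff_ge_half_radius[of a c T z] a T z \<open>c > 0\<close> by (intro frac_le) auto
    also have "\<dots> = norm ((z - a) / a)"
      using a by (simp add: norm_divide)
    also have "(z - a) / a = z / complex_of_real a - 1"
      using a by (simp add: field_simps)
    finally show ?thesis by (simp add: a_def)
  qed
  have "q \<le> q ^ K" using power_increasing[of 1 K q] \<open>K > 0\<close> \<open>q \<ge> 1\<close> by simp
  also have "\<dots> \<le> (\<Prod>k<K. norm (z / complex_of_real (R k * ln 2) - 1))"
    using prod_mono[of "{..<K}" "\<lambda>_. q"] factor \<open>q \<ge> 1\<close> by auto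
  finally have denominator: "q \<le> (\<Prod>k<K. norm (z / complex_of_real (R k * ln 2) - 1))" .
  have "T / 2 \<le> norm z"
    using norm_diff_ge_half_radius[of 0 c T z] T z \<open>c > 0\<close> by simp
  have "norm (gK_integrand K R z) =
        exp (Re z) / (norm z * (\<Prod>k<K. norm (z / complex_of_real (R k * ln 2) - 1)))"
    by (simp add: gK_integrand_def norm_divide norm_mult prod_norm)
  also have "\<dots> \<le> exp c / (T / 2 * q)"
    using \<open>Re z \<le> c\<close> \<open>T / 2 \<le> norm z\<close> denominator \<open>q \<ge> 1\<close> T \<open>c > 0\<close>
    by (intro frac_le mult_mono) auto
  also have "\<dots> = 4 * c * exp c / T^2"
    using \<open>c > 0\<close> T by (simp add: q_def field_simps power2_eq_square)
  finally show ?thesis .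
qed

lemma gK_left_arc_integral_tendsto_0:
  fixes c :: real
  assumes "K > 0" and pos: "\<And>k. k < K \<Longrightarrow> R k > 0" and lt: "\<And>k. k < K \<Longrightarrow> R k * ln 2 < c"
  shows "((\<lambda>T. contour_integral (part_circlepath c T (pi/2) (3/2*pi)) (gK_integrand K R))
           \<longlongrightarrow> 0) at_top"
proof (rule Lim_null_comparison)
  have "c > 0" using pos[of 0] lt[of 0] \<open>K > 0\<close> by (smt (verit) ln_gt_zero mult_pos_pos)
  have holo: "gK_integrand K R holomorphic_on - gK_poles K R"
    by (rule gK_integrand_holomorphic) (use pos in auto)
  show "\<forall>\<^sub>F T in at_top.
          norm (contour_integral (part_circlepath c T (pi/2) (3/2*pi)) (gK_integrand K R))
            \<le> 4 * c * exp c / T^2 * T * (3/2*pi - pi/2)"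
    using eventually_ge_at_top[of "2 * c"]
  proof eventually_elim
    case (elim T)
    have arc: "Re z \<le> c \<and> norm (z - c) = T"
      if "z \<in> path_image (part_circlepath c T (pi/2) (3/2*pi))" for z
      using left_half_circle_Re_le[OF that] in_path_image_part_circlepath[OF that] elim \<open>c > 0\<close>
      by auto
    have near: "Re p < c \<and> norm (p - complex_of_real c) < T" if "p \<in> gK_poles K R" for p
      by (rule gK_poles_near_abscissa) (use pos lt that elim \<open>c > 0\<close> in auto)
    have "path_image (part_circlepath c T (pi/2) (3/2*pi)) \<subseteq> - gK_poles K R"
    proof
      fix z assume "z \<in> path_image (part_circlepath c T (pi/2) (3/2*pi))"
      then show "z \<in> - gK_poles K R" using arc near by fastforce
    qed
    then have "gK_integrand K R contour_integrable_on part_circlepath c T (pi/2) (3/2*pi)"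
      using holo
      by (intro contour_integrable_holomorphic_simple[of _ "- gK_poles K R"])
         (auto intro: finite_imp_closed finite_gK_poles)
    then show ?case
    proof (rule has_contour_integral_bound_part_circlepath[OF has_contour_integral_integral])
      fix z assume "z \<in> path_image (part_circlepath c T (pi/2) (3/2*pi))"
      with arc have "Re z \<le> c" "norm (z - c) = T" by auto
      then show "norm (gK_integrand K R z) \<le> 4 * c * exp c / T^2"
        by (intro norm_gK_integrand_le) (use \<open>K > 0\<close> pos lt elim in auto)
    qed (use elim \<open>c > 0\<close> in auto)
  qed
  show "((\<lambda>T. 4 * c * exp c / T^2 * T * (3/2*pi - pi/2)) \<longlongrightarrow> 0) at_top"
    by real_asymp
qed

lemma contour_integral_gK_vertical_segment:
  fixes c T :: real
  assumes pos: "\<And>k. k < K \<Longrightarrow> R k > 0" and lt: "\<And>k. k < K \<Longrightarrow> R k * ln 2 < c"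
    and "0 < c" "2 * c \<le> T"
  shows "contour_integral (linepath (c - \<i> * T) (c + \<i> * T)) (gK_integrand K R) =
           2 * pi * \<i> * (\<Sum>p\<in>gK_poles K R. residue (gK_integrand K R) p)
         - contour_integral (part_circlepath c T (pi/2) (3/2*pi)) (gK_integrand K R)"
proof (rule contour_integral_vertical_segment_residues)
  show "gK_integrand K R holomorphic_on - gK_poles K R"
    by (rule gK_integrand_holomorphic) (use pos in auto)
  show "Re p < c \<and> norm (p - complex_of_real c) < T" if "p \<in> gK_poles K R" for p
    by (rule gK_poles_near_abscissa) (use pos lt that assms in auto)
qed (use assms in \<open>auto simp: finite_gK_poles\<close>)

theorem mainTheorem2:
  fixes K :: nat and R :: "nat \<Rightarrow> real" and c :: real
  assumes "K \<ge> 1"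
    and "\<And>k. k < K \<Longrightarrow> R k > 0"
    and "inj_on R {..<K}"
    and "\<And>k. k < K \<Longrightarrow> c > R k * ln 2"
  shows "((\<lambda>T::real. contour_integral
             (linepath (complex_of_real c - \<i> * complex_of_real T)
                       (complex_of_real c + \<i> * complex_of_real T))
             (gK_integrand K R) / (2 * complex_of_real pi * \<i>))
          \<longlongrightarrow> complex_of_real ((-1) ^ K + det (matA K R) / det (matB K R))) at_top"
proof -
  note pos = assms(2) and lt = assms(4)
  have "K > 0" using assms(1) by simp
  have "c > 0" using pos[of 0] lt[of 0] \<open>K > 0\<close> by (smt (verit) ln_gt_zero mult_pos_pos)
  define S where "S = (\<Sum>p\<in>gK_poles K R. residue (gK_integrand K R) p)"
  let ?arc = "\<lambda>T. contour_integral (part_circlepath c T (pi/2) (3/2*pi)) (gK_integrand K R)"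
  have "((\<lambda>T. S - ?arc T / (2 * complex_of_real pi * \<i>)) \<longlongrightarrow> S) at_top"
    using gK_left_arc_integral_tendsto_0[OF \<open>K > 0\<close> pos lt] by (auto intro!: tendsto_eq_intros)
  moreover have "\<forall>\<^sub>F T in at_top. S - ?arc T / (2 * complex_of_real pi * \<i>) =
      contour_integral (linepath (c - \<i> * T) (c + \<i> * T)) (gK_integrand K R) / (2 * complex_of_real pi * \<i>)"
    using eventually_ge_at_top[of "2 * c"]
  proof eventually_elim
    case (elim T)
    have "contour_integral (linepath (c - \<i> * T) (c + \<i> * T)) (gK_integrand K R) = 2 * pi * \<i> * S - ?arc T"
      unfolding S_def by (rule contour_integral_gK_vertical_segment) (use pos lt \<open>c > 0\<close> elim in auto)
    then show ?case by (simp add: field_simps)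
  qed
  ultimately show ?thesis
    using sum_residues_gK_integrand[OF \<open>K > 0\<close> pos assms(3)] by (simp add: S_def Lim_transform_eventually)
qed

end
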